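(* Let $\alpha_1\approx 0.24760367$ be the root in $[0,1]$ of $16\alpha^4+16\alpha^3-52\alpha^2+48\alpha-9=0$ and $\alpha_2\approx0.2797707433$ the root in $[0,1]$ of $8\alpha^4-8\alpha^3+8\alpha^2=1/2$, and let $\alpha_1\le\alpha\le\alpha_2$. If $(x,y)\in A_2$ and $G_\alpha^i(x,y)\in A_1$ for $i=1,2,3$, then $G_\alpha^4(x,y)\in A_2$; i.e., a point coming from $A_2$ remains in $A_1$ for at most $3$ consecutive steps.
   Context: Let $\tau:[0,1]\to[0,1]$ be the symmetric tent map, $\tau(x)=2x$ for $0\le x<1/2$ and $\tau(x)=2-2x$ for $1/2\le x\le 1$. For $0<\alpha<1$ define $G_\alpha:[0,1]^2\to[0,1]^2$ by $G_\alpha(x,y)=(y,\tau(\alpha y+(1-\alpha)x))$. Let $S(x,y)=\alpha y+(1-\alpha)x$, $A_1=\{(x,y)\in[0,1]^2: S(x,y)<1/2\}$ and $A_2=\{(x,y)\in[0,1]^2: S(x,y)\ge 1/2\}$. *)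

theory Defs
  imports Complex_Main
begin

definition tent :: "real \<Rightarrow> real" where
  "tent x = (if x < 1/2 then 2 * x else 2 - 2 * x)"

definition S :: "real \<Rightarrow> real \<times> real \<Rightarrow> real" where
  "S \<alpha> p = \<alpha> * snd p + (1 - \<alpha>) * fst p"

definition G :: "real \<Rightarrow> real \<times> real \<Rightarrow> real \<times> real" where
  "G \<alpha> p = (snd p, tent (S \<alpha> p))"

definition A1 :: "real \<Rightarrow> (real \<times> real) set" where
  "A1 \<alpha> = {p. p \<in> {0..1} \<times> {0..1} \<and> S \<alpha> p < 1/2}"

definition A2 :: "real \<Rightarrow> (real \<times> real) set" where
  "A2 \<alpha> = {p. p \<in> {0..1} \<times> {0..1} \<and> S \<alpha> p \<ge> 1/2}"

end

theory Submission
  imports Defs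
begin

text \<open>Within \<open>A\<^sub>1\<close> the tent map acts as \<open>t \<mapsto> 2t\<close>, so along three consecutive
  steps in \<open>A\<^sub>1\<close> the orbit obeys a linear recurrence. Unwinding it expresses the fourth
  value of \<open>S\<close> as \<open>c u + d y\<close>, with \<open>u\<close> the first image coordinate and coefficients
  polynomial in \<open>\<alpha>\<close>. For \<open>1/5 \<le> \<alpha> \<le> 1/2\<close> (an interval containing \<open>[\<alpha>\<^sub>1, \<alpha>\<^sub>2]\<close>) one has
  \<open>8\<alpha>(1-\<alpha>)\<^sup>2 \<ge> 1\<close>, giving \<open>4\<alpha>c \<ge> 1\<close> and \<open>2d \<ge> 1\<close>; combined with \<open>u + 2\<alpha>y \<ge> 2\<alpha>\<close>, which is
  the starting condition in \<open>A\<^sub>2\<close>, this yields \<open>c u + d y \<ge> 1/2\<close>.\<close>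

fun orbit :: "real \<Rightarrow> real \<Rightarrow> real \<Rightarrow> nat \<Rightarrow> real" where
  "orbit \<alpha> x y 0 = x"
| "orbit \<alpha> x y (Suc 0) = y"
| "orbit \<alpha> x y (Suc (Suc n)) = tent (S \<alpha> (orbit \<alpha> x y n, orbit \<alpha> x y (Suc n)))"

lemma funpow_G_eq_orbit:
  "(G \<alpha> ^^ n) (x, y) = (orbit \<alpha> x y n, orbit \<alpha> x y (Suc n))"
  by (induction n) (simp_all add: G_def)

lemma tent_in_unit_interval:
  "t \<in> {0..1} \<Longrightarrow> tent t \<in> {0..1}"
  by (auto simp: tent_def)

lemma S_in_unit_interval:
  assumes "\<alpha> \<in> {0..1}" "x \<in> {0..1}" "y \<in> {0..1}"
  shows "S \<alpha> (x, y) \<in> {0..1}"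
proof -
  have "\<alpha> * y \<le> \<alpha>" "(1 - \<alpha>) * x \<le> 1 - \<alpha>"
    using assms by (simp_all add: mult_left_le)
  then show ?thesis
    using assms by (simp add: S_def)
qed

lemma orbit_in_unit_interval:
  assumes "\<alpha> \<in> {0..1}" "x \<in> {0..1}" "y \<in> {0..1}"
  shows "orbit \<alpha> x y n \<in> {0..1}"
  using assms
proof (induction \<alpha> x y n rule: orbit.induct)
  case (3 \<alpha> x y n)
  then have "orbit \<alpha> x y n \<in> {0..1}" "orbit \<alpha> x y (Suc n) \<in> {0..1}"
    by simp_all
  with "3.prems" show ?case
    by (simp only: orbit.simps) (blast intro: tent_in_unit_interval S_in_unit_interval)
qed simp_all

lemma quartic_root_ge_one_fifth:
  fixes a :: real
  assumes "0 \<le> a" and "16*a^4 + 16*a^3 - 52*a^2 + 48*a - 9 = 0"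
  shows "1/5 \<le> a"
proof (rule ccontr)
  assume "\<not> 1/5 \<le> a"
  then have small: "a < 1/5" by simp
  have "a^4 \<le> (1/5)^4" "a^3 \<le> (1/5)^3"
    using assms(1) small by (intro power_mono; simp)+
  moreover have "(1/5 - a) * (52*a - 188/5) \<le> 0"
    using assms(1) small by (intro mult_nonneg_nonpos) auto
  moreover have "-52*a^2 + 48*a - 188/25 = (1/5 - a) * (52*a - 188/5)"
    by (simp add: field_simps power2_eq_square)
  ultimately have "16*a^4 + 16*a^3 - 52*a^2 + 48*a - 9 < 0"
    by (simp add: power_divide)
  with assms(2) show False by simp
qed

lemma quartic_root_le_one_half:
  fixes b :: real
  assumes "8*b^4 - 8*b^3 + 8*b^2 = 1/2"
  shows "b \<le> 1/2"
proof (rule ccontr)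
  assume "\<not> b \<le> 1/2"
  then have big: "1/2 < b" by simp
  have "b^2 - b + 1 = (b - 1/2)^2 + 3/4"
    by (simp add: algebra_simps power2_eq_square)
  then have "3/4 \<le> b^2 - b + 1" by simp
  moreover have "(1/2)^2 \<le> b^2"
    using big by (intro power_mono) auto
  ultimately have "(1/2)^2 * (3/4) \<le> b^2 * (b^2 - b + 1)"
    by (intro mult_mono) auto
  moreover have "8*b^4 - 8*b^3 + 8*b^2 = 8 * (b^2 * (b^2 - b + 1))"
    by (simp add: algebra_simps power2_eq_square power3_eq_cube power4_eq_xxxx)
  ultimately have "1/2 < 8*b^4 - 8*b^3 + 8*b^2"
    by (simp add: power_divide)
  with assms show False by simp
qed

lemma cubic_ge_one:
  fixes a :: real
  assumes "1/5 \<le> a" "a \<le> 1/2"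
  shows "1 \<le> 8*a*(1-a)^2"
proof -
  have "(a - 1/5) * (4*a - 26/5) \<le> 0"
    using assms by (intro mult_nonneg_nonpos) auto
  moreover have "4*a^2 - 6*a + 1 = (a - 1/5) * (4*a - 26/5) - 1/25"
    by (simp add: field_simps power2_eq_square)
  ultimately have "(2*a - 1) * (4*a^2 - 6*a + 1) \<ge> 0"
    using assms by (intro mult_nonpos_nonpos) auto
  moreover have "8*a*(1-a)^2 - 1 = (2*a - 1) * (4*a^2 - 6*a + 1)"
    by (simp add: algebra_simps power2_eq_square)
  ultimately show ?thesis by linarith
qed

lemma three_step_coefficients_ge:
  fixes a :: real
  assumes "1/5 \<le> a" "a \<le> 1/2"
  shows "1 \<le> 4*a*(8*a^4 + 12*a^2*(1-a) + 2*(1-a)^2)"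
    and "1/2 \<le> 8*a*(1-a)*(a^2 + (1-a))"
proof -
  have "1 \<le> 8*a*(1-a)^2" using cubic_ge_one[OF assms] .
  moreover have "0 \<le> a^5" "0 \<le> a^3*(1-a)" "0 \<le> 8*a*(1-a)*a^2"
    using assms by auto
  moreover have "4*a*(8*a^4 + 12*a^2*(1-a) + 2*(1-a)^2) = 32*a^5 + 48*(a^3*(1-a)) + 8*a*(1-a)^2"
    by (simp add: algebra_simps power2_eq_square power3_eq_cube power4_eq_xxxx eval_nat_numeral)
  moreover have "8*a*(1-a)*(a^2 + (1-a)) = 8*a*(1-a)*a^2 + 8*a*(1-a)^2"
    by (simp add: algebra_simps power2_eq_square)
  ultimately show "1 \<le> 4*a*(8*a^4 + 12*a^2*(1-a) + 2*(1-a)^2)"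
    and "1/2 \<le> 8*a*(1-a)*(a^2 + (1-a))"
    by linarith+
qed

lemma A2_after_three_steps_in_A1:
  fixes a x y :: real
  assumes a: "1/5 \<le> a" "a \<le> 1/2"
    and start: "(x, y) \<in> A2 a"
    and stay: "\<forall>i\<in>{1,2,3::nat}. (G a ^^ i) (x, y) \<in> A1 a"
  shows "(G a ^^ 4) (x, y) \<in> A2 a"
proof -
  define z where "z = orbit a x y"
  have xy: "x \<in> {0..1}" "y \<in> {0..1}" and s0: "1/2 \<le> a*y + (1-a)*x"
    using start by (auto simp: A2_def S_def)
  have z_unit: "z n \<in> {0..1}" for n
    unfolding z_def using a xy by (intro orbit_in_unit_interval) auto
  have S_lt: "S a (z i, z (Suc i)) < 1/2" if "i \<in> {1,2,3}" for i
    using stay that by (auto simp: funpow_G_eq_orbit A1_def z_def)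
  have z1: "z 1 = y"
    by (simp add: z_def)
  have z_rec: "z 2 = tent (a*y + (1-a)*x)" "z 3 = tent (a*z 2 + (1-a)*y)"
    "z 4 = tent (a*z 3 + (1-a)*z 2)" "z 5 = tent (a*z 4 + (1-a)*z 3)"
    by (simp_all add: z_def S_def numeral_eq_Suc)
  have s1: "a*z 2 + (1-a)*y < 1/2"
    using S_lt[of 1] z1 by (simp add: S_def numeral_2_eq_2)
  have s2: "a*z 3 + (1-a)*z 2 < 1/2" and s3: "a*z 4 + (1-a)*z 3 < 1/2"
    using S_lt[of 2] S_lt[of 3] by (simp_all add: S_def)
  have z2: "z 2 = 2 - 2*(a*y + (1-a)*x)"
    using s0 z_rec(1) by (simp add: tent_def)
  have z3: "z 3 = 2*(a*z 2 + (1-a)*y)"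
    using s1 z_rec(2) by (simp add: tent_def)
  have z4: "z 4 = 2*(a*z 3 + (1-a)*z 2)"
    using s2 z_rec(3) by (simp add: tent_def)
  have z5: "z 5 = 2*(a*z 4 + (1-a)*z 3)"
    using s3 z_rec(4) by (simp add: tent_def)
  define c where "c = 8*a^4 + 12*a^2*(1-a) + 2*(1-a)^2"
  define d where "d = 8*a*(1-a)*(a^2 + (1-a))"
  have unwound: "a*z 5 + (1-a)*z 4 = c * z 2 + d * y"
    unfolding z5 z4 z3 c_def d_def
    by (simp add: algebra_simps power2_eq_square power3_eq_cube power4_eq_xxxx)
  have "(1-a)*x \<le> 1-a"
    using xy a by (simp add: mult_left_le)
  then have "2*a \<le> z 2 + 2*a*y"
    using z2 by (simp add: algebra_simps)
  moreover have "0 \<le> (4*a*c - 1) * z 2" "0 \<le> (2*d - 1) * (2*a*y)"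
    using three_step_coefficients_ge[OF a] z_unit[of 2] xy a by (simp_all add: c_def d_def)
  ultimately have "2*a \<le> 4*a*(c * z 2 + d * y)"
    by (simp add: algebra_simps)
  then have "1/2 \<le> a*z 5 + (1-a)*z 4"
    using a unwound by simp
  then show ?thesis
    using z_unit by (simp add: funpow_G_eq_orbit A2_def S_def z_def)
qed

theorem proposition9:
  fixes \<alpha>1 \<alpha>2 \<alpha> x y :: real
  assumes "\<alpha>1 \<in> {0..1}"
      and "16*\<alpha>1^4 + 16*\<alpha>1^3 - 52*\<alpha>1^2 + 48*\<alpha>1 - 9 = 0"
      and "\<alpha>2 \<in> {0..1}"
      and "8*\<alpha>2^4 - 8*\<alpha>2^3 + 8*\<alpha>2^2 = 1/2"
      and "0 < \<alpha>" and "\<alpha> < 1"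
      and "\<alpha>1 \<le> \<alpha>" and "\<alpha> \<le> \<alpha>2"
      and "(x, y) \<in> A2 \<alpha>"
      and "\<forall>i\<in>{1,2,3::nat}. (G \<alpha> ^^ i) (x, y) \<in> A1 \<alpha>"
  shows "(G \<alpha> ^^ 4) (x, y) \<in> A2 \<alpha>"
proof (rule A2_after_three_steps_in_A1)
  show "1/5 \<le> \<alpha>"
    using quartic_root_ge_one_fifth[of \<alpha>1] assms(1,2,7) by simp
  show "\<alpha> \<le> 1/2"
    using quartic_root_le_one_half[OF assms(4)] assms(8) by simp
qed (use assms(9,10) in auto)

end
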